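(* Let $s\in\mathbb{N}$, let $A=(a_{ij})\in\mathbb{R}^{s\times s}$ be weakly positive definite, let $\mu\in\{1,2\}$ and $h_t>0$. Define $\mathcal{A}:\mathbf{V}\to\mathbf{V}^*$ by $$\langle \mathcal{A}\mathbf{u},\mathbf{v}\rangle=\sum_{i=1}^s\langle u_i,v_i\rangle_{L^2}+h_t^{\mu}\sum_{i=1}^s\sum_{j=1}^s a_{ij}\langle u_j,v_i\rangle_{H_0^1},\qquad \mathbf{u},\mathbf{v}\in\mathbf{V},$$ i.e. $\mathcal{A}=\mathbb{I}^{s\times s}\otimes\mathcal{I}+h_t^{\mu}A\otimes\mathcal{K}$ in weak form. Then $\mathcal{A}$ is an isomorphism from $\mathbf{V}$ onto $\mathbf{V}^*$, and there are finite constants $c_1,c_2$, depending only on $A$ and $s$ (in particular independent of $h_t$), such that $$\|\mathcal{A}\|_{\mathcal{L}(\mathbf{V},\mathbf{V}^* )}\le c_1,\qquad \|\mathcal{A}^{-1}\|_{\mathcal{L}(\mathbf{V}^*,\mathbf{V})}\le c_2.$$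
   Context: A real matrix $A\in\mathbb{R}^{s\times s}$ is called weakly positive definite if there exists a symmetric positive definite matrix $C\in\mathbb{R}^{s\times s}$ such that $CA$ is positive definite, i.e. $x^TCAx>0$ for all nonzero $x\in\mathbb{R}^s$. Let $\Omega\subset\mathbb{R}^d$ be a bounded polygonal domain whose boundary is partitioned into disjoint parts $\partial\Omega_N,\partial\Omega_D$. Let $\alpha,\beta\in L^\infty(\Omega)$ with $\alpha>0$ (bounded below by a positive constant) and $\beta\ge 0$ on $\Omega$. Define $\langle u,v\rangle_{L^2}=\int_\Omega uv$ and $\langle u,v\rangle_{H_0^1}=\int_\Omega(\alpha\nabla u\cdot\nabla v+\beta uv)$ (possibly only a semi-inner product), with $\|u\|_{H_0^1}^2=\langle u,u\rangle_{H_0^1}$; this is the weak form of $\mathcal{K}u=-\nabla\cdot(\alpha\nabla u)+\beta u$. Let $V$ be the space of $H^1(\Omega)$ functions vanishing on $\partial\Omega_D$, with inner product $\langle u,v\rangle_V=\langle u,v\rangle_{L^2}+h_t^{\mu}\langle u,v\rangle_{H_0^1}$ and norm $\|u\|_V^2=\|u\|_{L^2}^2+h_t^{\mu}\|u\|_{H_0^1}^2$. Let $\mathbf{V}=V^s$ with $\langle\mathbf{u},\mathbf{v}\rangle_{\mathbf{V}}=\sum_{i=1}^s\langle u_i,v_i\rangle_V$ and induced norm, and let $\mathbf{V}^*$ be its dual with the dual norm. *)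

theory Defs
  imports "HOL-Analysis.Analysis"
begin

definition posdef :: "real^'n^'n \<Rightarrow> bool" where
  "posdef M \<longleftrightarrow> (\<forall>x::real^'n. x \<noteq> 0 \<longrightarrow> x \<bullet> (M *v x) > 0)"

definition weakly_posdef :: "real^'n^'n \<Rightarrow> bool" where
  "weakly_posdef A \<longleftrightarrow> (\<exists>C. transpose C = C \<and> posdef C \<and> posdef (C ** A))"

definition Vnorm :: "('v \<Rightarrow> 'v \<Rightarrow> real) \<Rightarrow> ('v \<Rightarrow> 'v \<Rightarrow> real) \<Rightarrow> real \<Rightarrow> nat \<Rightarrow> 'v \<Rightarrow> real" where
  "Vnorm L K h \<mu> u = sqrt (L u u + h ^ \<mu> * K u u)"

text \<open>Abstract setting of the paper: V is a real vector space on which L is a symmetric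
  positive definite bilinear form (L2 inner product), K is a symmetric positive semidefinite
  bilinear form (H_0^1 semi-inner product), and V is complete w.r.t. ||.||_V.\<close>
definition hilbert_setting ::
  "('v::real_vector \<Rightarrow> 'v \<Rightarrow> real) \<Rightarrow> ('v \<Rightarrow> 'v \<Rightarrow> real) \<Rightarrow> real \<Rightarrow> nat \<Rightarrow> bool" where
  "hilbert_setting L K h \<mu> \<longleftrightarrow>
     bilinear L \<and> bilinear K \<and> (\<forall>u v. L u v = L v u) \<and> (\<forall>u v. K u v = K v u) \<and>
     (\<forall>u. u \<noteq> 0 \<longrightarrow> L u u > 0) \<and> (\<forall>u. K u u \<ge> 0) \<and>
     (\<forall>X::nat \<Rightarrow> 'v. (\<forall>e>0. \<exists>N. \<forall>m\<ge>N. \<forall>n\<ge>N. Vnorm L K h \<mu> (X m - X n) < e)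
        \<longrightarrow> (\<exists>x. (\<lambda>n. Vnorm L K h \<mu> (X n - x)) \<longlonglongrightarrow> 0))"

definition VVnorm :: "('v \<Rightarrow> 'v \<Rightarrow> real) \<Rightarrow> ('v \<Rightarrow> 'v \<Rightarrow> real) \<Rightarrow> real \<Rightarrow> nat \<Rightarrow> 'v^'s::finite \<Rightarrow> real" where
  "VVnorm L K h \<mu> u = sqrt (\<Sum>i\<in>UNIV. L (u$i) (u$i) + h ^ \<mu> * K (u$i) (u$i))"

definition Vdual :: "('v::real_vector \<Rightarrow> 'v \<Rightarrow> real) \<Rightarrow> ('v \<Rightarrow> 'v \<Rightarrow> real) \<Rightarrow> real \<Rightarrow> nat
     \<Rightarrow> ('v^'s::finite \<Rightarrow> real) set" where
  "Vdual L K h \<mu> = {f. linear f \<and> (\<exists>C. \<forall>u. \<bar>f u\<bar> \<le> C * VVnorm L K h \<mu> u)}"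

definition dualnorm :: "('v \<Rightarrow> 'v \<Rightarrow> real) \<Rightarrow> ('v \<Rightarrow> 'v \<Rightarrow> real) \<Rightarrow> real \<Rightarrow> nat
     \<Rightarrow> ('v^'s::finite \<Rightarrow> real) \<Rightarrow> real" where
  "dualnorm L K h \<mu> f = (SUP u. \<bar>f u\<bar> / VVnorm L K h \<mu> u)"

definition Aop :: "real^'s^'s \<Rightarrow> ('v \<Rightarrow> 'v \<Rightarrow> real) \<Rightarrow> ('v \<Rightarrow> 'v \<Rightarrow> real) \<Rightarrow> real \<Rightarrow> nat
     \<Rightarrow> 'v^'s::finite \<Rightarrow> ('v^'s \<Rightarrow> real)" where
  "Aop A L K h \<mu> u = (\<lambda>v. (\<Sum>i\<in>UNIV. L (u$i) (v$i))
       + h ^ \<mu> * (\<Sum>i\<in>UNIV. \<Sum>j\<in>UNIV. A$i$j * K (u$j) (v$i)))"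

end

theory Submission
  imports Defs
begin

text \<open>Weak positive definiteness provides a symmetric positive definite \<open>C\<close> such that \<open>C A\<close> is
  positive definite. Testing the operator with \<open>(C \<otimes> I) v\<close> instead of \<open>v\<close> turns the
  \<open>L\<^sup>2\<close> part into the quadratic form of \<open>C\<close> and the \<open>H\<^sub>0\<^sup>1\<close> part into that
  of \<open>C A\<close>, both evaluated on Gram matrices of positive semidefinite forms; a coercive matrix
  paired with a Gram matrix dominates its trace, so the operator is coercive after this change
  of test functions, with a constant depending only on \<open>A\<close> and \<open>C\<close>. A Lax--Milgram
  argument, with the symmetric case obtained by minimising the energy in the complete space
  \<open>V\<^sup>s\<close>, then yields the isomorphism. The bounds do not depend on \<open>h\<^sub>t\<close>
  because \<open>h\<^sub>t\<^sup>\<mu>\<close> scales the semidefinite form \<open>K\<close> in the operator exactly as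
  it does in the norm of \<open>V\<close>.\<close>

section \<open>Positive semidefinite bilinear forms\<close>

definition form_norm :: "('a \<Rightarrow> 'a \<Rightarrow> real) \<Rightarrow> 'a \<Rightarrow> real" where
  "form_norm B x = sqrt (B x x)"

lemma quadratic_nonneg_imp_discrim_le:
  fixes a b c :: real
  assumes "0 \<le> c" and nonneg: "\<And>t. 0 \<le> a + b * t + c * t\<^sup>2"
  shows "b\<^sup>2 \<le> 4 * a * c"
proof (cases "c = 0")
  case True
  show ?thesis
  proof (rule ccontr)
    assume "\<not> ?thesis"
    then have "b \<noteq> 0" using True by auto
    have "0 \<le> a + b * (- (\<bar>a\<bar> + 1) / b)" using nonneg[of "- (\<bar>a\<bar> + 1) / b"] True by simp
    also have "\<dots> = a - (\<bar>a\<bar> + 1)" using \<open>b \<noteq> 0\<close> by (simp add: field_simps)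
    finally show False by linarith
  qed
next
  case False
  with \<open>0 \<le> c\<close> have "0 < c" by simp
  have "0 \<le> a + b * (- b / (2 * c)) + c * (- b / (2 * c))\<^sup>2" by (rule nonneg)
  also have "\<dots> = a - b\<^sup>2 / (4 * c)" using \<open>0 < c\<close> by (simp add: field_simps power2_eq_square)
  finally show ?thesis using \<open>0 < c\<close> by (simp add: field_simps)
qed

lemma bilinear_compose_linear:
  assumes "bilinear b" and "linear F" and "linear G"
  shows "bilinear (\<lambda>u v. b (F u) (G v))"
  unfolding bilinear_def using assms
  by (auto intro!: linearI simp: linear_add linear_scale bilinear_ladd bilinear_radd
      bilinear_lmul bilinear_rmul)

lemma psd_quadratic_form_delete:
  fixes P :: "'i \<Rightarrow> 'i \<Rightarrow> real"
  assumes "finite S" and "a \<notin> S"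
    and psd: "\<forall>y. 0 \<le> (\<Sum>j\<in>insert a S. \<Sum>k\<in>insert a S. P j k * y j * y k)"
  shows "\<forall>y. 0 \<le> (\<Sum>j\<in>S. \<Sum>k\<in>S. P j k * y j * y k)"
proof
  fix y :: "'i \<Rightarrow> real"
  have "0 \<le> (\<Sum>j\<in>insert a S. \<Sum>k\<in>insert a S. P j k * (y(a := 0)) j * (y(a := 0)) k)"
    using psd by blast
  also have "\<dots> = (\<Sum>j\<in>S. \<Sum>k\<in>S. P j k * y j * y k)"
    using assms(1,2) by simp (intro sum.cong refl, auto)
  finally show "0 \<le> (\<Sum>j\<in>S. \<Sum>k\<in>S. P j k * y j * y k)" .
qed

locale psd_form =
  fixes B :: "'a::real_vector \<Rightarrow> 'a \<Rightarrow> real"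
  assumes bilinear: "bilinear B"
    and sym: "B x y = B y x"
    and nonneg: "0 \<le> B x x"
begin

lemmas ladd = bilinear_ladd[OF bilinear]
  and radd = bilinear_radd[OF bilinear]
  and lsub = bilinear_lsub[OF bilinear]
  and rsub = bilinear_rsub[OF bilinear]
  and lzero[simp] = bilinear_lzero[OF bilinear]
  and rzero[simp] = bilinear_rzero[OF bilinear]

lemma lmul: "B (c *\<^sub>R x) y = c * B x y"
  using bilinear_lmul[OF bilinear] by simp

lemma rmul: "B x (c *\<^sub>R y) = c * B x y"
  using bilinear_rmul[OF bilinear] by simp

lemma sum_left: "B (sum f S) y = (\<Sum>i\<in>S. B (f i) y)"
  by (induction S rule: infinite_finite_induct) (auto simp: ladd)

lemma sum_right: "B x (sum f S) = (\<Sum>i\<in>S. B x (f i))"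
  by (induction S rule: infinite_finite_induct) (auto simp: radd)

lemma Cauchy_Schwarz_square: "(B x y)\<^sup>2 \<le> B x x * B y y"
proof -
  have "0 \<le> B x x + (2 * B x y) * t + B y y * t\<^sup>2" for t
  proof -
    have "B (x + t *\<^sub>R y) (x + t *\<^sub>R y) = B x x + (2 * B x y) * t + B y y * t\<^sup>2"
      by (simp add: ladd radd lmul rmul sym[of y x] power2_eq_square algebra_simps)
    then show ?thesis using nonneg by metis
  qed
  from quadratic_nonneg_imp_discrim_le[OF nonneg this] show ?thesis
    by (simp add: power2_eq_square)
qed

lemma form_norm_nonneg: "0 \<le> form_norm B x"
  using nonneg by (simp add: form_norm_def)

lemma form_norm_square: "(form_norm B x)\<^sup>2 = B x x"
  using nonneg by (simp add: form_norm_def)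

lemma Cauchy_Schwarz: "\<bar>B x y\<bar> \<le> form_norm B x * form_norm B y"
  using real_sqrt_le_mono[OF Cauchy_Schwarz_square[of x y]]
  by (simp add: form_norm_def real_sqrt_mult)

lemma null_vector_orthogonal: "B x x = 0 \<Longrightarrow> B x y = 0"
  using Cauchy_Schwarz_square[of x y] by simp

lemma Gram_sum_insert_null:
  assumes "finite S" and "a \<notin> S" and null: "\<And>x. B (u a) x = 0"
  shows "(\<Sum>j\<in>insert a S. \<Sum>k\<in>insert a S. P j k * B (u j) (u k))
    = (\<Sum>j\<in>S. \<Sum>k\<in>S. P j k * B (u j) (u k))"
proof -
  have "B x (u a) = 0" for x using null sym by metis
  then show ?thesis using assms by simp
qed

lemma Gram_Schmidt_split:
  assumes "0 < B v v" and c: "\<And>x. c x = B x v / B v v"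
  shows "B x y = B (x - c x *\<^sub>R v) (y - c y *\<^sub>R v) + B v v * (c x * c y)"
proof -
  have orth: "B (x - c x *\<^sub>R v) v = 0" for x
    using assms by (simp add: lsub lmul)
  then have orth': "B v (x - c x *\<^sub>R v) = 0" for x
    using sym by metis
  have "B x y = B ((x - c x *\<^sub>R v) + c x *\<^sub>R v) ((y - c y *\<^sub>R v) + c y *\<^sub>R v)"
    by simp
  also have "\<dots> = B (x - c x *\<^sub>R v) (y - c y *\<^sub>R v) + c x * B v (y - c y *\<^sub>R v)
      + c y * (B (x - c x *\<^sub>R v) v + c x * B v v)"
    by (simp only: ladd radd lmul rmul)
  finally show ?thesis
    by (simp add: orth orth')
qed

text \<open>Splitting off \<open>u a\<close> by a Gram--Schmidt step decomposes the Gram matrix of \<open>u\<close> into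
  that of vectors with \<open>u a\<close> replaced by \<open>0\<close> plus a nonnegative multiple of a rank-one
  matrix, on which \<open>P\<close> is nonnegative by hypothesis.\<close>
lemma psd_matrix_Gram_nonneg:
  fixes P :: "'i \<Rightarrow> 'i \<Rightarrow> real" and u :: "'i \<Rightarrow> 'a"
  assumes "finite S" and "\<forall>y. 0 \<le> (\<Sum>j\<in>S. \<Sum>k\<in>S. P j k * y j * y k)"
  shows "0 \<le> (\<Sum>j\<in>S. \<Sum>k\<in>S. P j k * B (u j) (u k))"
  using assms
proof (induction S arbitrary: u rule: finite_induct)
  case empty
  then show ?case by simp
next
  case (insert a S)
  note IH = insert.IH[OF psd_quadratic_form_delete[OF insert.hyps insert.prems]]
  show ?case
  proof (cases "B (u a) (u a) = 0")
    case True
    then have "B (u a) x = 0" for x by (rule null_vector_orthogonal)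
    then show ?thesis using Gram_sum_insert_null[OF insert.hyps] IH by simp
  next
    case False
    define d where "d = B (u a) (u a)"
    have "0 < d" using False nonneg by (simp add: d_def order_less_le)
    define c where "c x = B x (u a) / d" for x
    define w where "w j = u j - c (u j) *\<^sub>R u a" for j
    have decomp: "B (u j) (u k) = B (w j) (w k) + d * (c (u j) * c (u k))" for j k
      unfolding w_def d_def using \<open>0 < d\<close> by (intro Gram_Schmidt_split) (simp_all add: c_def d_def)
    have "(\<Sum>j\<in>insert a S. \<Sum>k\<in>insert a S. P j k * B (u j) (u k)) =
        (\<Sum>j\<in>insert a S. \<Sum>k\<in>insert a S. P j k * B (w j) (w k)) +
        d * (\<Sum>j\<in>insert a S. \<Sum>k\<in>insert a S. P j k * c (u j) * c (u k))"
      by (simp add: decomp distrib_left sum.distrib sum_distrib_left algebra_simps)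
    also have "(\<Sum>j\<in>insert a S. \<Sum>k\<in>insert a S. P j k * B (w j) (w k)) =
        (\<Sum>j\<in>S. \<Sum>k\<in>S. P j k * B (w j) (w k))"
      using \<open>0 < d\<close> by (intro Gram_sum_insert_null[OF insert.hyps]) (simp add: w_def c_def d_def)
    finally show ?thesis
      using IH[of w] insert.prems \<open>0 < d\<close> by simp
  qed
qed

lemma inner_matrix_vector_mult_eq_sum:
  fixes M :: "real^'n^'n"
  shows "x \<bullet> (M *v x) = (\<Sum>j\<in>UNIV. \<Sum>k\<in>UNIV. M$j$k * x$j * x$k)"
  by (simp add: inner_vec_def matrix_vector_mult_def sum_distrib_left algebra_simps)

lemma Gram_coercive:
  fixes M :: "real^'n^'n" and u :: "'a^'n"
  assumes coercive: "\<And>x. c * (x \<bullet> x) \<le> x \<bullet> (M *v x)"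
  shows "c * (\<Sum>j\<in>UNIV. B (u$j) (u$j)) \<le> (\<Sum>j\<in>UNIV. \<Sum>k\<in>UNIV. M$j$k * B (u$j) (u$k))"
proof -
  have diagonal: "(\<Sum>j\<in>UNIV. \<Sum>k\<in>UNIV. (if j = k then c else 0) * F j k) = c * (\<Sum>j\<in>UNIV. F j j)"
    for F :: "'n \<Rightarrow> 'n \<Rightarrow> real"
    by (simp add: if_distrib[of "\<lambda>t. t * _"] sum_distrib_left cong: if_cong)
  define P where "P j k = M$j$k - (if j = k then c else 0)" for j k
  have P_psd: "0 \<le> (\<Sum>j\<in>UNIV. \<Sum>k\<in>UNIV. P j k * y j * y k)" for y
  proof -
    have "(\<Sum>j\<in>UNIV. \<Sum>k\<in>UNIV. P j k * y j * y k) 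
        = (\<chi> i. y i) \<bullet> (M *v (\<chi> i. y i)) - c * ((\<chi> i. y i) \<bullet> (\<chi> i. y i))"
      using diagonal[of "\<lambda>j k. y j * y k"]
      unfolding inner_matrix_vector_mult_eq_sum
      by (simp add: P_def inner_vec_def left_diff_distrib sum_subtractf mult.assoc)
    then show ?thesis using coercive[of "\<chi> i. y i"] by simp
  qed
  have "0 \<le> (\<Sum>j\<in>UNIV. \<Sum>k\<in>UNIV. P j k * B (u$j) (u$k))"
    using P_psd by (intro psd_matrix_Gram_nonneg) auto
  then show ?thesis
    using diagonal[of "\<lambda>j k. B (u$j) (u$k)"]
    by (simp add: P_def left_diff_distrib sum_subtractf)
qed

lemma Gram_sum_transpose:
  "(\<Sum>j\<in>UNIV. \<Sum>k\<in>UNIV. M$k$j * B (u$j) (u$k)) = (\<Sum>j\<in>UNIV. \<Sum>k\<in>UNIV. M$j$k * B (u$j) (u$k))"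
proof -
  have "(\<Sum>j\<in>UNIV. \<Sum>k\<in>UNIV. M$k$j * B (u$j) (u$k)) = (\<Sum>k\<in>UNIV. \<Sum>j\<in>UNIV. M$k$j * B (u$j) (u$k))"
    by (rule sum.swap)
  also have "\<dots> = (\<Sum>j\<in>UNIV. \<Sum>k\<in>UNIV. M$j$k * B (u$j) (u$k))"
    using sym by (intro sum.cong refl) metis
  finally show ?thesis .
qed

lemma psd_form_compose_linear: "linear T \<Longrightarrow> psd_form (\<lambda>u v. B (T u) (T v))"
  using bilinear_compose_linear[OF bilinear] sym nonneg by unfold_locales simp_all

end

lemma psd_form_add:
  assumes "psd_form P" and "psd_form Q"
  shows "psd_form (\<lambda>x y. P x y + Q x y)"
proof -
  interpret P: psd_form P by fact
  interpret Q: psd_form Q by fact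
  show ?thesis
  proof
    show "bilinear (\<lambda>x y. P x y + Q x y)"
      unfolding bilinear_def
      by (auto intro!: linearI simp: P.ladd P.radd Q.ladd Q.radd P.lmul P.rmul Q.lmul Q.rmul
          algebra_simps)
    show "P x y + Q x y = P y x + Q y x" for x y
      using P.sym Q.sym by metis
    show "0 \<le> P x x + Q x x" for x
      using P.nonneg Q.nonneg by (rule add_nonneg_nonneg)
  qed
qed

lemma psd_form_scale:
  assumes "psd_form P" and "0 \<le> c"
  shows "psd_form (\<lambda>x y. c * P x y)"
proof -
  interpret P: psd_form P by fact
  show ?thesis
  proof
    show "bilinear (\<lambda>x y. c * P x y)"
      unfolding bilinear_def by (auto intro!: linearI simp: P.ladd P.radd P.lmul P.rmul algebra_simps)
    show "c * P x y = c * P y x" for x y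
      using P.sym by metis
    show "0 \<le> c * P x x" for x
      using \<open>0 \<le> c\<close> P.nonneg by simp
  qed
qed

section \<open>Lax--Milgram in a complete inner product space\<close>

definition energy :: "('a \<Rightarrow> 'a \<Rightarrow> real) \<Rightarrow> ('a \<Rightarrow> real) \<Rightarrow> 'a \<Rightarrow> real" where
  "energy a l v = a v v / 2 - l v"

lemma minimizing_sequence_exists:
  fixes J :: "'a \<Rightarrow> real"
  assumes "bdd_below (range J)"
  obtains X where "(\<lambda>n. J (X n)) \<longlonglongrightarrow> Inf (range J)"
proof -
  have "Inf (range J) \<in> closure (range J)"
    using assms by (intro closure_contains_Inf) simp_all
  then obtain y where "\<forall>n. \<exists>x. y n = J x" and "y \<longlonglongrightarrow> Inf (range J)"
    unfolding closure_sequential by (auto simp: image_iff)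
  moreover from this(1) obtain X where "y = (\<lambda>n. J (X n))"
    by (metis choice ext)
  ultimately show ?thesis using that by simp
qed

context psd_form
begin

lemma energy_minimizer_Euler_Lagrange:
  assumes "linear l" and minimal: "\<And>w. energy B l u \<le> energy B l w"
  shows "B u v = l v"
proof -
  have "0 \<le> 0 + (B u v - l v) * t + (B v v / 2) * t\<^sup>2" for t
  proof -
    have "energy B l (u + t *\<^sub>R v) - energy B l u = (B u v - l v) * t + (B v v / 2) * t\<^sup>2"
      using \<open>linear l\<close>
      by (simp add: energy_def ladd radd lmul rmul sym[of v u] linear_add linear_scale
          power2_eq_square algebra_simps)
    then show ?thesis using minimal[of "u + t *\<^sub>R v"] by simp
  qed
  from quadratic_nonneg_imp_discrim_le[OF _ this] nonneg[of v]
  have "(B u v - l v)\<^sup>2 \<le> 0" by simp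
  then show ?thesis by simp
qed

lemma tendsto_bounded_linear:
  assumes "linear l" and bounded: "\<And>v. \<bar>l v\<bar> \<le> \<Lambda> * form_norm B v"
    and lim: "(\<lambda>n. form_norm B (X n - u)) \<longlonglongrightarrow> 0"
  shows "(\<lambda>n. l (X n)) \<longlonglongrightarrow> l u"
proof -
  have "(\<lambda>n. l (X n) - l u) \<longlonglongrightarrow> 0"
  proof (rule Lim_null_comparison)
    have "\<bar>l (X n) - l u\<bar> \<le> \<bar>\<Lambda>\<bar> * form_norm B (X n - u)" for n
      using order_trans[OF bounded[of "X n - u"] mult_right_mono[OF abs_ge_self form_norm_nonneg]]
        \<open>linear l\<close> by (simp add: linear_diff)
    then show "\<forall>\<^sub>F n in sequentially. norm (l (X n) - l u) \<le> \<bar>\<Lambda>\<bar> * form_norm B (X n - u)"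
      by simp
    show "(\<lambda>n. \<bar>\<Lambda>\<bar> * form_norm B (X n - u)) \<longlonglongrightarrow> 0"
      using tendsto_mult_right_zero[OF lim] by simp
  qed
  then show ?thesis by (simp add: LIM_zero_iff)
qed

lemma tendsto_bounded_bilinear_diagonal:
  assumes "bilinear a" and bounded: "\<And>u v. \<bar>a u v\<bar> \<le> M * form_norm B u * form_norm B v"
    and lim: "(\<lambda>n. form_norm B (X n - u)) \<longlonglongrightarrow> 0"
  shows "(\<lambda>n. a (X n) (X n)) \<longlonglongrightarrow> a u u"
proof -
  have split: "a (X n) (X n) - a u u = a (X n - u) (X n - u) + a u (X n - u) + a (X n - u) u" for n
    using \<open>bilinear a\<close> by (simp add: bilinear_lsub bilinear_rsub algebra_simps)
  have "(\<lambda>n. a (X n) (X n) - a u u) \<longlonglongrightarrow> 0"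
  proof (rule Lim_null_comparison)
    let ?e = "\<lambda>n. form_norm B (X n - u)"
    show "\<forall>\<^sub>F n in sequentially. norm (a (X n) (X n) - a u u)
        \<le> \<bar>M\<bar> * ?e n * ?e n + 2 * \<bar>M\<bar> * form_norm B u * ?e n"
    proof (intro always_eventually allI)
      fix n
      have bound: "\<bar>a w w'\<bar> \<le> \<bar>M\<bar> * form_norm B w * form_norm B w'" for w w'
        using bounded[of w w'] mult_right_mono[OF abs_ge_self, of "form_norm B w * form_norm B w'" M]
          form_norm_nonneg[of w] form_norm_nonneg[of w'] by (simp add: mult.assoc)
      show "norm (a (X n) (X n) - a u u) \<le> \<bar>M\<bar> * ?e n * ?e n + 2 * \<bar>M\<bar> * form_norm B u * ?e n"
        using bound[of "X n - u" "X n - u"] bound[of u "X n - u"] bound[of "X n - u" u]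
        unfolding split real_norm_def by (simp add: mult_ac)
    qed
    show "(\<lambda>n. \<bar>M\<bar> * ?e n * ?e n + 2 * \<bar>M\<bar> * form_norm B u * ?e n) \<longlonglongrightarrow> 0"
      using tendsto_add[OF tendsto_mult[OF tendsto_mult_right_zero[OF lim] lim]
          tendsto_mult_right_zero[OF lim]] by simp
  qed
  then show ?thesis by (simp add: LIM_zero_iff)
qed

end

locale inner_form_space = psd_form B for B :: "'a::real_vector \<Rightarrow> 'a \<Rightarrow> real" +
  assumes pos: "x \<noteq> 0 \<Longrightarrow> 0 < B x x"
    and complete: "\<forall>e>0. \<exists>N. \<forall>m\<ge>N. \<forall>n\<ge>N. form_norm B (X m - X n) < e
      \<Longrightarrow> \<exists>x. (\<lambda>n. form_norm B (X n - x)) \<longlonglongrightarrow> 0"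
begin

lemma form_norm_eq_0_iff: "form_norm B x = 0 \<longleftrightarrow> x = 0"
  using pos[of x] by (cases "x = 0") (auto simp: form_norm_def)

lemma eq_if_same_form:
  assumes "\<And>v. B x v = B y v"
  shows "x = y"
proof -
  have "B (x - y) (x - y) = 0" using assms[of "x - y"] by (simp add: lsub)
  then show ?thesis using pos[of "x - y"] by (cases "x = y") auto
qed

text \<open>The parallelogram identity
  \<open>a (x - y) (x - y) = 4 J x + 4 J y - 8 J ((x + y) / 2)\<close> for the energy \<open>J\<close> turns
  near-minimality of two points into closeness.\<close>
lemma minimizing_sequence_Cauchy:
  assumes "psd_form a" and "0 < \<alpha>" and coercive: "\<And>v. \<alpha> * B v v \<le> a v v"
    and "linear l" and lower: "\<And>w. d \<le> energy a l w"
    and lim: "(\<lambda>n. energy a l (X n)) \<longlonglongrightarrow> d"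
  shows "\<forall>e>0. \<exists>N. \<forall>m\<ge>N. \<forall>n\<ge>N. form_norm B (X m - X n) < e"
proof (intro allI impI)
  fix e :: real
  assume "0 < e"
  interpret a: psd_form a by fact
  have parallelogram: "a (x - y) (x - y)
      = 4 * energy a l x + 4 * energy a l y - 8 * energy a l ((1/2) *\<^sub>R (x + y))" for x y
    using \<open>linear l\<close>
    by (simp add: energy_def a.ladd a.radd a.lsub a.rsub a.lmul a.rmul a.sym[of y x]
        linear_add linear_scale algebra_simps)
  have "\<forall>\<^sub>F n in sequentially. energy a l (X n) < d + \<alpha> * e\<^sup>2 / 8"
    using \<open>0 < \<alpha>\<close> \<open>0 < e\<close> by (intro order_tendstoD(2)[OF lim]) simp
  then obtain N where N: "\<And>n. N \<le> n \<Longrightarrow> energy a l (X n) < d + \<alpha> * e\<^sup>2 / 8"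
    by (auto simp: eventually_sequentially)
  have "form_norm B (X m - X n) < e" if "N \<le> m" "N \<le> n" for m n
  proof -
    have "\<alpha> * B (X m - X n) (X m - X n) < \<alpha> * e\<^sup>2"
      using coercive[of "X m - X n"] parallelogram[of "X m" "X n"] N[OF that(1)] N[OF that(2)]
        lower[of "(1/2) *\<^sub>R (X m + X n)"] by simp
    then have "B (X m - X n) (X m - X n) < e\<^sup>2" using \<open>0 < \<alpha>\<close> by simp
    then show ?thesis
      using real_sqrt_less_mono \<open>0 < e\<close> by (fastforce simp: form_norm_def)
  qed
  then show "\<exists>N. \<forall>m\<ge>N. \<forall>n\<ge>N. form_norm B (X m - X n) < e" by blast
qed

lemma coercive_energy_bounded_below:
  assumes "0 < \<alpha>" and coercive: "\<And>v. \<alpha> * B v v \<le> a v v"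
    and l_bounded: "\<And>v. \<bar>l v\<bar> \<le> \<Lambda> * form_norm B v"
  shows "- \<Lambda>\<^sup>2 / (2 * \<alpha>) \<le> energy a l v"
proof -
  have "0 \<le> \<alpha> / 2 * (form_norm B v - \<Lambda> / \<alpha>)\<^sup>2" using \<open>0 < \<alpha>\<close> by simp
  also have "\<dots> = \<alpha> / 2 * (form_norm B v)\<^sup>2 - \<Lambda> * form_norm B v + \<Lambda>\<^sup>2 / (2 * \<alpha>)"
    using \<open>0 < \<alpha>\<close> by (simp add: field_simps power2_eq_square)
  also have "\<dots> \<le> energy a l v + \<Lambda>\<^sup>2 / (2 * \<alpha>)"
    using coercive[of v] l_bounded[of v] by (simp add: energy_def form_norm_square abs_le_iff)
  finally show ?thesis by simp
qed

lemma coercive_energy_has_minimizer: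
  assumes "psd_form a" and "0 < \<alpha>" and coercive: "\<And>v. \<alpha> * B v v \<le> a v v"
    and a_bounded: "\<And>u v. \<bar>a u v\<bar> \<le> M * form_norm B u * form_norm B v"
    and "linear l" and l_bounded: "\<And>v. \<bar>l v\<bar> \<le> \<Lambda> * form_norm B v"
  shows "\<exists>u. \<forall>w. energy a l u \<le> energy a l w"
proof -
  interpret a: psd_form a by fact
  have "bdd_below (range (energy a l))"
    using coercive_energy_bounded_below[where a = a and l = l, OF \<open>0 < \<alpha>\<close> coercive l_bounded] by (intro bdd_belowI2)
  then have lower: "Inf (range (energy a l)) \<le> energy a l w" for w
    by (rule cINF_lower) simp
  obtain X where lim: "(\<lambda>n. energy a l (X n)) \<longlonglongrightarrow> Inf (range (energy a l))"
    using minimizing_sequence_exists[OF \<open>bdd_below _\<close>] by blast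
  obtain u where u: "(\<lambda>n. form_norm B (X n - u)) \<longlonglongrightarrow> 0"
    using complete minimizing_sequence_Cauchy[OF assms(1-3,5) lower lim] by blast
  have "(\<lambda>n. energy a l (X n)) \<longlonglongrightarrow> energy a l u"
    unfolding energy_def
    by (intro tendsto_intros tendsto_bounded_bilinear_diagonal[OF a.bilinear a_bounded u]
        tendsto_bounded_linear[OF \<open>linear l\<close> l_bounded u]) simp
  with lim have "energy a l u = Inf (range (energy a l))" by (rule LIMSEQ_unique[symmetric])
  then show ?thesis using lower by metis
qed

lemma symmetric_Lax_Milgram:
  assumes "psd_form a" and "0 < \<alpha>" and "\<And>v. \<alpha> * B v v \<le> a v v"
    and "\<And>u v. \<bar>a u v\<bar> \<le> M * form_norm B u * form_norm B v"
    and "linear l" and "\<And>v. \<bar>l v\<bar> \<le> \<Lambda> * form_norm B v"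
  shows "\<exists>u. \<forall>v. a u v = l v"
proof -
  obtain u where "\<forall>w. energy a l u \<le> energy a l w"
    using coercive_energy_has_minimizer[OF assms] by blast
  then show ?thesis
    using psd_form.energy_minimizer_Euler_Lagrange[OF \<open>psd_form a\<close> \<open>linear l\<close>] by blast
qed

lemma Riesz_representation:
  assumes "linear l" and "\<And>v. \<bar>l v\<bar> \<le> \<Lambda> * form_norm B v"
  shows "\<exists>r. \<forall>v. B r v = l v"
  by (rule symmetric_Lax_Milgram[of B 1 1]) (use assms Cauchy_Schwarz in \<open>simp_all add: psd_form_axioms\<close>)

end

definition bounded_functionals :: "('a::real_vector \<Rightarrow> 'a \<Rightarrow> real) \<Rightarrow> ('a \<Rightarrow> real) set" where
  "bounded_functionals B = {f. linear f \<and> (\<exists>C. \<forall>u. \<bar>f u\<bar> \<le> C * form_norm B u)}"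

definition functional_norm :: "('a \<Rightarrow> 'a \<Rightarrow> real) \<Rightarrow> ('a \<Rightarrow> real) \<Rightarrow> real" where
  "functional_norm B f = (SUP u. \<bar>f u\<bar> / form_norm B u)"

context inner_form_space
begin

lemma functional_norm_upper:
  assumes "f \<in> bounded_functionals B"
  shows "\<bar>f v\<bar> \<le> functional_norm B f * form_norm B v"
    and "0 \<le> functional_norm B f"
proof -
  obtain C where C: "\<And>u. \<bar>f u\<bar> \<le> C * form_norm B u" and "linear f"
    using assms by (auto simp: bounded_functionals_def)
  have bdd: "bdd_above (range (\<lambda>u. \<bar>f u\<bar> / form_norm B u))"
  proof (rule bdd_aboveI2)
    fix u
    have "\<bar>f u\<bar> \<le> max C 0 * form_norm B u"
      using C[of u] mult_right_mono[of C "max C 0" "form_norm B u"] form_norm_nonneg[of u] by simp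
    then show "\<bar>f u\<bar> / form_norm B u \<le> max C 0"
      using form_norm_nonneg[of u] by (cases "form_norm B u = 0") (auto simp: divide_le_eq)
  qed
  have ratio_le: "\<bar>f u\<bar> / form_norm B u \<le> functional_norm B f" for u
    unfolding functional_norm_def by (rule cSUP_upper[OF _ bdd]) simp
  have "f 0 = 0" using \<open>linear f\<close> by (rule linear_0)
  then show "0 \<le> functional_norm B f" using ratio_le[of 0] by simp
  show "\<bar>f v\<bar> \<le> functional_norm B f * form_norm B v"
  proof (cases "v = 0")
    case True
    then show ?thesis using \<open>f 0 = 0\<close> by (simp add: form_norm_def)
  next
    case False
    then have "0 < form_norm B v"
      using form_norm_nonneg form_norm_eq_0_iff by (simp add: order_less_le)
    then show ?thesis using ratio_le[of v] by (simp add: divide_le_eq)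
  qed
qed

lemma functional_norm_le:
  assumes "\<And>v. \<bar>f v\<bar> \<le> D * form_norm B v" and "0 \<le> D"
  shows "functional_norm B f \<le> D"
  unfolding functional_norm_def
proof (rule cSUP_least)
  fix u
  show "\<bar>f u\<bar> / form_norm B u \<le> D"
    using assms assms(1)[of u] form_norm_nonneg[of u]
    by (cases "form_norm B u = 0") (auto simp: divide_le_eq)
qed simp

lemma bounded_bilinear_representation:
  assumes "bilinear b" and "0 \<le> M" and bounded: "\<And>u v. \<bar>b u v\<bar> \<le> M * form_norm B u * form_norm B v"
  obtains T where "linear T" and "\<And>u v. B (T u) v = b u v"
    and "\<And>u. form_norm B (T u) \<le> M * form_norm B u"
proof -
  have "\<exists>w. \<forall>v. B w v = b u v" for u
    using \<open>bilinear b\<close> bounded[of u]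
    by (intro Riesz_representation[of _ "M * form_norm B u"]) (auto simp: bilinear_def mult.assoc)
  then obtain T where T: "\<And>u v. B (T u) v = b u v" by metis
  have "linear T"
    using \<open>bilinear b\<close>
    by (intro linearI eq_if_same_form) (simp_all add: T ladd lmul bilinear_ladd bilinear_lmul)
  moreover have "form_norm B (T u) \<le> M * form_norm B u" for u
  proof -
    have "form_norm B (T u) * form_norm B (T u) \<le> (M * form_norm B u) * form_norm B (T u)"
      using bounded[of u "T u"] T[of u "T u"] form_norm_square[of "T u"]
      by (simp add: power2_eq_square)
    then show ?thesis
      using form_norm_nonneg[of "T u"] \<open>0 \<le> M\<close> form_norm_nonneg[of u]
      by (cases "form_norm B (T u) = 0") (auto simp: mult_le_cancel_right)
  qed
  ultimately show ?thesis using T that by blast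
qed

lemma representation_bounded_below:
  assumes T: "\<And>u v. B (T u) v = b u v" and "0 < \<alpha>" and coercive: "\<And>v. \<alpha> * B v v \<le> b v v"
  shows "\<alpha> * form_norm B u \<le> form_norm B (T u)"
proof -
  have "\<alpha> * form_norm B u * form_norm B u = \<alpha> * B u u"
    by (simp add: form_norm_square[symmetric] power2_eq_square)
  also have "\<dots> \<le> B (T u) u" using coercive[of u] T[of u u] by simp
  also have "\<dots> \<le> form_norm B (T u) * form_norm B u"
    using Cauchy_Schwarz[of "T u" u] by simp
  finally show ?thesis
    using form_norm_nonneg[of u] form_norm_nonneg[of "T u"] \<open>0 < \<alpha>\<close>
    by (cases "form_norm B u = 0") (auto simp: mult_le_cancel_right)
qed

text \<open>The non-symmetric case is reduced to the symmetric one: with \<open>T\<close> representing \<open>b\<close> and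
  \<open>r\<close> representing \<open>l\<close>, the symmetric form \<open>B (T u) (T v)\<close> yields \<open>u\<close> with
  \<open>T u - r\<close> orthogonal to the range of \<open>T\<close>, and coercivity forces \<open>T u = r\<close>.\<close>
lemma Lax_Milgram:
  assumes "bilinear b" and "0 \<le> M" and bounded: "\<And>u v. \<bar>b u v\<bar> \<le> M * form_norm B u * form_norm B v"
    and "0 < \<alpha>" and coercive: "\<And>v. \<alpha> * B v v \<le> b v v"
    and "linear l" and "\<And>v. \<bar>l v\<bar> \<le> \<Lambda> * form_norm B v"
  shows "\<exists>u. \<forall>v. b u v = l v"
proof -
  obtain T where "linear T" and T: "\<And>u v. B (T u) v = b u v"
    and T_bounded: "\<And>u. form_norm B (T u) \<le> M * form_norm B u"
    using bounded_bilinear_representation[OF \<open>bilinear b\<close> \<open>0 \<le> M\<close> bounded] by blast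
  note T_below = representation_bounded_below[OF T \<open>0 < \<alpha>\<close> coercive]
  obtain r where r: "\<And>v. B r v = l v" using Riesz_representation assms(6,7) by blast
  have "\<alpha>\<^sup>2 * B v v \<le> B (T v) (T v)" for v
  proof -
    have "(\<alpha> * form_norm B v)\<^sup>2 \<le> (form_norm B (T v))\<^sup>2"
      using T_below[of v] \<open>0 < \<alpha>\<close> form_norm_nonneg[of v] by (intro power_mono) auto
    then show ?thesis by (simp add: power_mult_distrib form_norm_square)
  qed
  moreover have "\<bar>B (T u) (T v)\<bar> \<le> M\<^sup>2 * form_norm B u * form_norm B v" for u v
    using order_trans[OF Cauchy_Schwarz mult_mono[OF T_bounded T_bounded]]
      \<open>0 \<le> M\<close> form_norm_nonneg by (simp add: power2_eq_square mult_ac)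
  moreover have "\<bar>B r (T v)\<bar> \<le> (form_norm B r * M) * form_norm B v" for v
    using order_trans[OF Cauchy_Schwarz mult_left_mono[OF T_bounded form_norm_nonneg]]
    by (simp add: mult_ac)
  moreover have "linear (\<lambda>v. B r (T v))"
    using \<open>linear T\<close> by (intro linearI) (simp_all add: linear_add linear_scale radd rmul)
  ultimately obtain u where u: "\<And>v. B (T u) (T v) = B r (T v)"
    using symmetric_Lax_Milgram[OF psd_form_compose_linear[OF \<open>linear T\<close>]] \<open>0 < \<alpha>\<close>
    by (metis zero_less_power)
  define z where "z = T u - r"
  have "b z z = B (T z) z" by (simp add: T)
  also have "\<dots> = 0" using u[of z] sym[of "T z"] by (simp add: z_def lsub rsub)
  finally have "z = 0"
    using coercive[of z] pos[of z] \<open>0 < \<alpha>\<close> by (cases "z = 0") (auto simp: mult_le_0_iff)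
  then show ?thesis using T r by (metis z_def right_minus_eq)
qed

end

locale T_coercive_form = inner_form_space B for B :: "'a::real_vector \<Rightarrow> 'a \<Rightarrow> real" +
  fixes b :: "'a \<Rightarrow> 'a \<Rightarrow> real" and G :: "'a \<Rightarrow> 'a" and M \<kappa> \<alpha> :: real
  assumes bilinear_b: "bilinear b"
    and M_nonneg: "0 \<le> M" and b_bounded: "\<And>u v. \<bar>b u v\<bar> \<le> M * form_norm B u * form_norm B v"
    and linear_G: "linear G" and surj_G: "surj G"
    and \<kappa>_nonneg: "0 \<le> \<kappa>" and G_bounded: "\<And>v. form_norm B (G v) \<le> \<kappa> * form_norm B v"
    and \<alpha>_pos: "0 < \<alpha>" and T_coercive: "\<And>v. \<alpha> * B v v \<le> b v (G v)"
begin

lemma b_in_bounded_functionals: "b u \<in> bounded_functionals B"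
  using bilinear_b b_bounded[of u]
  by (auto simp: bounded_functionals_def bilinear_def mult.assoc intro!: exI[of _ "M * form_norm B u"])

lemma functional_norm_b_le: "functional_norm B (b u) \<le> M * form_norm B u"
  using b_bounded M_nonneg form_norm_nonneg by (intro functional_norm_le) (simp_all add: mult.assoc)

lemma inj_b: "inj b"
proof (rule injI)
  fix x y
  assume "b x = b y"
  then have "b (x - y) (G (x - y)) = 0" by (simp add: bilinear_lsub[OF bilinear_b])
  then have "B (x - y) (x - y) \<le> 0"
    using T_coercive[of "x - y"] \<alpha>_pos by (simp add: mult_le_0_iff)
  then show "x = y" using pos[of "x - y"] by (cases "x = y") auto
qed

lemma range_b: "range b = bounded_functionals B"
proof (intro equalityI subsetI)
  fix f
  assume f: "f \<in> bounded_functionals B"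
  have "\<exists>u. \<forall>v. b u (G v) = f (G v)"
  proof (rule Lax_Milgram)
    show "bilinear (\<lambda>u v. b u (G v))"
      using bilinear_compose_linear[OF bilinear_b linear_id linear_G] by simp
    show "\<bar>b u (G v)\<bar> \<le> M * \<kappa> * form_norm B u * form_norm B v" for u v
      using order_trans[OF b_bounded mult_left_mono[OF G_bounded]] M_nonneg form_norm_nonneg
      by (simp add: mult_ac)
    show "linear (\<lambda>v. f (G v))"
      using f linear_G linear_compose[of G f] by (simp add: bounded_functionals_def o_def)
    show "\<bar>f (G v)\<bar> \<le> functional_norm B f * \<kappa> * form_norm B v" for v
      using order_trans[OF functional_norm_upper(1)[OF f] mult_left_mono[OF G_bounded]]
        functional_norm_upper(2)[OF f] by (simp add: mult_ac)
  qed (use M_nonneg \<kappa>_nonneg \<alpha>_pos T_coercive in simp_all)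
  then obtain u where "\<And>v. b u (G v) = f (G v)" by blast
  with surj_G have "f = b u" by (metis surjD ext)
  then show "f \<in> range b" by simp
qed (use b_in_bounded_functionals in blast)

lemma bij_betw_b: "bij_betw b UNIV (bounded_functionals B)"
  using inj_b range_b by (simp add: bij_betw_def)

lemma form_norm_le_functional_norm: "form_norm B u \<le> \<kappa> / \<alpha> * functional_norm B (b u)"
proof -
  note f = b_in_bounded_functionals[of u]
  have "\<alpha> * form_norm B u * form_norm B u \<le> \<alpha> * B u u"
    by (simp add: form_norm_square[symmetric] power2_eq_square)
  also have "\<dots> \<le> b u (G u)" by (rule T_coercive)
  also have "\<dots> \<le> functional_norm B (b u) * form_norm B (G u)"
    using functional_norm_upper(1)[OF f] abs_ge_self order_trans by blast
  also have "\<dots> \<le> functional_norm B (b u) * \<kappa> * form_norm B u"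
    using mult_left_mono[OF G_bounded functional_norm_upper(2)[OF f]] by (simp add: mult_ac)
  finally show ?thesis
    using \<alpha>_pos \<kappa>_nonneg functional_norm_upper(2)[OF f] form_norm_nonneg[of u]
    by (cases "form_norm B u = 0") (auto simp: field_simps mult_le_cancel_right)
qed

end

section \<open>Block forms on \<open>V\<^sup>s\<close>\<close>

definition block_form :: "('a \<Rightarrow> 'a \<Rightarrow> real) \<Rightarrow> 'a^'s::finite \<Rightarrow> 'a^'s \<Rightarrow> real" where
  "block_form B u v = (\<Sum>i\<in>UNIV. B (u$i) (v$i))"

definition matrix_act :: "real^'s^'s \<Rightarrow> 'a::real_vector^'s::finite \<Rightarrow> 'a^'s" where
  "matrix_act C v = (\<chi> i. \<Sum>k\<in>UNIV. C$i$k *\<^sub>R v$k)"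

context psd_form
begin

lemma psd_form_block_form: "psd_form (block_form B :: 'a^'s::finite \<Rightarrow> _)"
proof
  show "bilinear (block_form B :: 'a^'s \<Rightarrow> _)"
    unfolding bilinear_def block_form_def
    by (auto intro!: linearI simp: ladd radd lmul rmul sum.distrib sum_distrib_left)
  show "block_form B u v = block_form B v u" for u v :: "'a^'s"
    unfolding block_form_def by (intro sum.cong refl sym)
  show "0 \<le> block_form B u u" for u :: "'a^'s"
    unfolding block_form_def by (intro sum_nonneg nonneg)
qed

lemma form_norm_component_le: "form_norm B (u$i) \<le> form_norm (block_form B) u"
  unfolding form_norm_def block_form_def
  by (intro real_sqrt_le_mono member_le_sum) (simp_all add: nonneg)

lemma dominated_component_bound:
  assumes "psd_form P" and dominated: "\<And>x. P x x \<le> B x x"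
  shows "\<bar>P (u$i) (v$j)\<bar> \<le> form_norm (block_form B) u * form_norm (block_form B) v"
proof -
  interpret P: psd_form P by fact
  have component: "form_norm P (w$k) \<le> form_norm (block_form B) w" for w :: "'a^'s" and k
    using real_sqrt_le_mono[OF dominated, of "w$k"] form_norm_component_le[of w k]
    unfolding form_norm_def[of P] form_norm_def[of B] by linarith
  show ?thesis
    using P.Cauchy_Schwarz[of "u$i" "v$j"]
      mult_mono[OF component[of u i] component[of v j]
        psd_form.form_norm_nonneg[OF psd_form_block_form] P.form_norm_nonneg] by linarith
qed

lemma block_form_matrix_act:
  "block_form B v (matrix_act C v) = (\<Sum>j\<in>UNIV. \<Sum>k\<in>UNIV. C$j$k * B (v$j) (v$k))"
  by (simp add: block_form_def matrix_act_def sum_right rmul)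

lemma coupled_sum_matrix_act:
  fixes A C :: "real^'s::finite^'s"
  assumes "transpose C = C"
  shows "(\<Sum>i\<in>UNIV. \<Sum>j\<in>UNIV. A$i$j * B (v$j) (matrix_act C v $ i))
    = (\<Sum>j\<in>UNIV. \<Sum>k\<in>UNIV. (C ** A)$j$k * B (v$j) (v$k))"
proof -
  have C_sym: "C$i$k = C$k$i" for i k
    using arg_cong[OF assms, of "\<lambda>M. M$i$k"] by (simp add: transpose_def)
  have "(\<Sum>i\<in>UNIV. \<Sum>j\<in>UNIV. A$i$j * B (v$j) (matrix_act C v $ i))
      = (\<Sum>i\<in>UNIV. \<Sum>j\<in>UNIV. \<Sum>k\<in>UNIV. C$k$i * A$i$j * B (v$j) (v$k))"
    by (simp add: matrix_act_def sum_right rmul sum_distrib_left C_sym mult_ac)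
  also have "\<dots> = (\<Sum>j\<in>UNIV. \<Sum>i\<in>UNIV. \<Sum>k\<in>UNIV. C$k$i * A$i$j * B (v$j) (v$k))"
    by (rule sum.swap)
  also have "\<dots> = (\<Sum>j\<in>UNIV. \<Sum>k\<in>UNIV. \<Sum>i\<in>UNIV. C$k$i * A$i$j * B (v$j) (v$k))"
    by (intro sum.cong refl sum.swap)
  also have "\<dots> = (\<Sum>j\<in>UNIV. \<Sum>k\<in>UNIV. (C ** A)$k$j * B (v$j) (v$k))"
    by (simp add: matrix_matrix_mult_def sum_distrib_right)
  also have "\<dots> = (\<Sum>j\<in>UNIV. \<Sum>k\<in>UNIV. (C ** A)$j$k * B (v$j) (v$k))"
    by (rule Gram_sum_transpose)
  finally show ?thesis .
qed

lemma form_norm_matrix_act_le: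
  "form_norm (block_form B) (matrix_act C v)
    \<le> sqrt (\<Sum>i\<in>UNIV. \<Sum>k\<in>UNIV. \<Sum>l\<in>UNIV. \<bar>C$i$k\<bar> * \<bar>C$i$l\<bar>) * form_norm (block_form B) v"
proof -
  let ?n = "form_norm (block_form B) v"
  have "block_form B (matrix_act C v) (matrix_act C v)
      = (\<Sum>i\<in>UNIV. \<Sum>k\<in>UNIV. \<Sum>l\<in>UNIV. C$i$k * C$i$l * B (v$l) (v$k))"
    by (simp add: block_form_def matrix_act_def sum_left sum_right lmul rmul sum_distrib_left mult_ac)
  also have "\<dots> \<le> (\<Sum>i\<in>UNIV. \<Sum>k\<in>UNIV. \<Sum>l\<in>UNIV. \<bar>C$i$k\<bar> * \<bar>C$i$l\<bar> * ?n\<^sup>2)"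
  proof (intro sum_mono)
    fix i k l
    have "C$i$k * C$i$l * B (v$l) (v$k) \<le> \<bar>C$i$k\<bar> * \<bar>C$i$l\<bar> * \<bar>B (v$l) (v$k)\<bar>"
      by (metis abs_ge_self abs_mult)
    also have "\<dots> \<le> \<bar>C$i$k\<bar> * \<bar>C$i$l\<bar> * ?n\<^sup>2"
      using dominated_component_bound[OF psd_form_axioms order_refl]
      by (intro mult_left_mono) (simp_all add: power2_eq_square)
    finally show "C$i$k * C$i$l * B (v$l) (v$k) \<le> \<bar>C$i$k\<bar> * \<bar>C$i$l\<bar> * ?n\<^sup>2" .
  qed
  also have "\<dots> = (sqrt (\<Sum>i\<in>UNIV. \<Sum>k\<in>UNIV. \<Sum>l\<in>UNIV. \<bar>C$i$k\<bar> * \<bar>C$i$l\<bar>) * ?n)\<^sup>2"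
    by (simp add: power_mult_distrib sum_nonneg sum_distrib_right)
  finally have "form_norm (block_form B) (matrix_act C v)
      \<le> sqrt ((sqrt (\<Sum>i\<in>UNIV. \<Sum>k\<in>UNIV. \<Sum>l\<in>UNIV. \<bar>C$i$k\<bar> * \<bar>C$i$l\<bar>) * ?n)\<^sup>2)"
    unfolding form_norm_def[of _ "matrix_act C v"] by (rule real_sqrt_le_mono)
  then show ?thesis
    by (simp add: abs_mult sum_nonneg psd_form.form_norm_nonneg[OF psd_form_block_form])
qed

end

lemma (in inner_form_space) inner_form_space_block_form:
  "inner_form_space (block_form B :: 'a^'s::finite \<Rightarrow> _)"
proof -
  interpret W: psd_form "block_form B :: 'a^'s \<Rightarrow> _" by (rule psd_form_block_form)
  show ?thesis
  proof
    fix x :: "'a^'s"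
    assume "x \<noteq> 0"
    then obtain i where "x$i \<noteq> 0" by (auto simp: vec_eq_iff)
    then show "0 < block_form B x x"
      unfolding block_form_def by (intro sum_pos2[of UNIV i]) (simp_all add: pos nonneg)
  next
    fix X :: "nat \<Rightarrow> 'a^'s"
    assume Cauchy: "\<forall>e>0. \<exists>N. \<forall>m\<ge>N. \<forall>n\<ge>N. form_norm (block_form B) (X m - X n) < e"
    have "\<exists>y. (\<lambda>n. form_norm B (X n $ i - y)) \<longlonglongrightarrow> 0" for i
    proof (rule complete, intro allI impI)
      fix e :: real
      assume "0 < e"
      then obtain N where N: "\<forall>m\<ge>N. \<forall>n\<ge>N. form_norm (block_form B) (X m - X n) < e"
        using Cauchy by blast
      have "form_norm B (X m $ i - X n $ i) \<le> form_norm (block_form B) (X m - X n)" for m n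
        using form_norm_component_le[of "X m - X n" i] by simp
      with N show "\<exists>N. \<forall>m\<ge>N. \<forall>n\<ge>N. form_norm B (X m $ i - X n $ i) < e"
        by (meson le_less_trans)
    qed
    then obtain Y where Y: "\<And>i. (\<lambda>n. form_norm B (X n $ i - Y i)) \<longlonglongrightarrow> 0" by metis
    have "(\<lambda>n. \<Sum>i\<in>UNIV. (form_norm B (X n $ i - Y i))\<^sup>2) \<longlonglongrightarrow> (\<Sum>i\<in>(UNIV::'s set). 0\<^sup>2)"
      by (intro tendsto_intros Y)
    then have "(\<lambda>n. block_form B (X n - (\<chi> i. Y i)) (X n - (\<chi> i. Y i))) \<longlonglongrightarrow> 0"
      by (simp add: block_form_def form_norm_square)
    then have "(\<lambda>n. form_norm (block_form B) (X n - (\<chi> i. Y i))) \<longlonglongrightarrow> sqrt 0"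
      unfolding form_norm_def[of "block_form B"] by (rule tendsto_real_sqrt)
    then show "\<exists>x. (\<lambda>n. form_norm (block_form B) (X n - x)) \<longlonglongrightarrow> 0" by auto
  qed
qed

lemma linear_matrix_act: "linear (matrix_act (C :: real^'s::finite^'s) :: 'a::real_vector^'s \<Rightarrow> _)"
proof (rule linearI)
  show "matrix_act C (x + y) = matrix_act C x + matrix_act C y" for x y :: "'a::real_vector^'s"
    by (simp add: matrix_act_def vec_eq_iff scaleR_add_right sum.distrib)
  show "matrix_act C (c *\<^sub>R x) = c *\<^sub>R matrix_act C x" for c and x :: "'a^'s"
    by (simp add: matrix_act_def vec_eq_iff scaleR_sum_right mult.commute)
qed

lemma matrix_act_matrix_mult: "matrix_act (C ** D) v = matrix_act C (matrix_act D v)"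
proof -
  have "(\<Sum>l\<in>UNIV. (\<Sum>k\<in>UNIV. C$i$k * D$k$l) *\<^sub>R v$l)
      = (\<Sum>k\<in>UNIV. C$i$k *\<^sub>R (\<Sum>l\<in>UNIV. D$k$l *\<^sub>R v$l))" for i
  proof -
    have "(\<Sum>l\<in>UNIV. (\<Sum>k\<in>UNIV. C$i$k * D$k$l) *\<^sub>R v$l)
        = (\<Sum>l\<in>UNIV. \<Sum>k\<in>UNIV. (C$i$k * D$k$l) *\<^sub>R v$l)"
      by (simp add: scaleR_sum_left)
    also have "\<dots> = (\<Sum>k\<in>UNIV. \<Sum>l\<in>UNIV. (C$i$k * D$k$l) *\<^sub>R v$l)"
      by (rule sum.swap)
    finally show ?thesis by (simp add: scaleR_sum_right)
  qed
  then show ?thesis by (simp add: matrix_act_def matrix_matrix_mult_def vec_eq_iff)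
qed

lemma matrix_act_mat_1: "matrix_act (mat 1) v = v"
  by (simp add: matrix_act_def vec_eq_iff mat_def if_distrib[of "\<lambda>c. c *\<^sub>R _"] cong: if_cong)

lemma surj_matrix_act: "C ** D = mat 1 \<Longrightarrow> surj (matrix_act C)"
  by (metis matrix_act_matrix_mult matrix_act_mat_1 surjI)

section \<open>The operator of the time discretisation\<close>

definition V_inner :: "('v \<Rightarrow> 'v \<Rightarrow> real) \<Rightarrow> ('v \<Rightarrow> 'v \<Rightarrow> real) \<Rightarrow> real \<Rightarrow> nat \<Rightarrow> 'v \<Rightarrow> 'v \<Rightarrow> real"
  where "V_inner L K h \<mu> u v = L u v + h ^ \<mu> * K u v"

lemma VVnorm_eq_form_norm: "VVnorm L K h \<mu> = form_norm (block_form (V_inner L K h \<mu>))"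
  by (simp add: fun_eq_iff VVnorm_def form_norm_def block_form_def V_inner_def)

lemma Vdual_eq_bounded_functionals: "Vdual L K h \<mu> = bounded_functionals (block_form (V_inner L K h \<mu>))"
  by (simp add: Vdual_def bounded_functionals_def VVnorm_eq_form_norm)

lemma dualnorm_eq_functional_norm: "dualnorm L K h \<mu> = functional_norm (block_form (V_inner L K h \<mu>))"
  by (simp add: fun_eq_iff dualnorm_def functional_norm_def VVnorm_eq_form_norm)

lemma hilbert_setting_psd_forms:
  assumes "hilbert_setting L K h \<mu>"
  shows "psd_form L" and "psd_form K"
proof -
  have L: "bilinear L" "\<And>u v. L u v = L v u" "\<And>u. u \<noteq> 0 \<Longrightarrow> 0 < L u u"
    and K: "bilinear K" "\<And>u v. K u v = K v u" "\<And>u. 0 \<le> K u u"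
    using assms by (simp_all add: hilbert_setting_def)
  have "0 \<le> L u u" for u
    using L(3)[of u] bilinear_lzero[OF L(1)] by (cases "u = 0") auto
  with L show "psd_form L" by unfold_locales auto
  from K show "psd_form K" by unfold_locales auto
qed

lemma psd_form_V_inner:
  assumes "psd_form L" and "psd_form K" and "0 < h"
  shows "psd_form (V_inner L K h \<mu>)"
  unfolding V_inner_def[abs_def] using assms by (intro psd_form_add psd_form_scale) simp_all

lemma inner_form_space_V_inner:
  assumes "hilbert_setting L K h \<mu>" and "0 < h"
  shows "inner_form_space (V_inner L K h \<mu>)"
proof (intro inner_form_space.intro inner_form_space_axioms.intro)
  note psd = hilbert_setting_psd_forms[OF assms(1)]
  show "psd_form (V_inner L K h \<mu>)" by (rule psd_form_V_inner[OF psd \<open>0 < h\<close>])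
  show "0 < V_inner L K h \<mu> u u" if "u \<noteq> 0" for u
    using assms that psd_form.nonneg[OF psd(2), of u]
    by (simp add: V_inner_def hilbert_setting_def add_pos_nonneg)
  show "\<exists>x. (\<lambda>n. form_norm (V_inner L K h \<mu>) (X n - x)) \<longlonglongrightarrow> 0"
    if "\<forall>e>0. \<exists>N. \<forall>m\<ge>N. \<forall>n\<ge>N. form_norm (V_inner L K h \<mu>) (X m - X n) < e" for X
    using assms(1) that by (simp add: hilbert_setting_def Vnorm_def form_norm_def V_inner_def)
qed

lemma posdef_imp_coercive:
  fixes M :: "real^'n^'n"
  assumes "posdef M"
  obtains c where "0 < c" and "\<And>x. c * (x \<bullet> x) \<le> x \<bullet> (M *v x)"
proof -
  have "continuous_on (sphere 0 1) (\<lambda>x::real^'n. x \<bullet> (M *v x))"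
    by (intro continuous_intros linear_continuous_on matrix_vector_mul_linear bounded_linear_intros)
  moreover have "sphere (0::real^'n) 1 \<noteq> {}" by simp
  ultimately obtain x0 where "x0 \<in> sphere 0 1"
    and x0_min: "\<And>y. y \<in> sphere 0 1 \<Longrightarrow> x0 \<bullet> (M *v x0) \<le> y \<bullet> (M *v y)"
    using continuous_attains_inf[OF compact_sphere] by blast
  define c where "c = x0 \<bullet> (M *v x0)"
  have "x0 \<noteq> 0" using \<open>x0 \<in> sphere 0 1\<close> by auto
  then have "0 < c" using assms by (simp add: c_def posdef_def)
  moreover have "c * (x \<bullet> x) \<le> x \<bullet> (M *v x)" for x
  proof (cases "x = 0")
    case False
    have "c \<le> ((1 / norm x) *\<^sub>R x) \<bullet> (M *v ((1 / norm x) *\<^sub>R x))"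
      unfolding c_def using False by (intro x0_min) simp
    also have "\<dots> = (x \<bullet> (M *v x)) / (norm x)\<^sup>2"
      by (simp add: matrix_vector_mult_scaleR power2_eq_square)
    finally show ?thesis using False by (simp add: field_simps power2_norm_eq_inner)
  qed simp
  ultimately show ?thesis using that by blast
qed

lemma posdef_imp_right_invertible:
  fixes C :: "real^'n^'n"
  assumes "posdef C"
  obtains D where "C ** D = mat 1"
proof -
  have "x = 0" if "C *v x = 0" for x
    using assms that by (auto simp: posdef_def)
  then obtain D where "D ** C = mat 1" using matrix_left_invertible_ker by blast
  then show ?thesis using that matrix_left_right_inverse by blast
qed

lemma bilinear_Aop:
  assumes "bilinear L" and "bilinear K"
  shows "bilinear (Aop A L K h \<mu>)"
  unfolding bilinear_def Aop_def
  by (auto intro!: linearI simp: bilinear_ladd[OF assms(1)] bilinear_radd[OF assms(1)]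
      bilinear_lmul[OF assms(1)] bilinear_rmul[OF assms(1)] bilinear_ladd[OF assms(2)]
      bilinear_radd[OF assms(2)] bilinear_lmul[OF assms(2)] bilinear_rmul[OF assms(2)]
      sum.distrib sum_distrib_left algebra_simps)

lemma Aop_bounded:
  fixes A :: "real^'s::finite^'s" and L K :: "'v::real_vector \<Rightarrow> 'v \<Rightarrow> real" and \<mu> :: nat
  assumes "psd_form L" and "psd_form K" and "0 < h"
  defines "N \<equiv> form_norm (block_form (V_inner L K h \<mu>) :: 'v^'s \<Rightarrow> _)"
  shows "\<bar>Aop A L K h \<mu> u v\<bar> \<le> (real CARD('s) + (\<Sum>i\<in>UNIV. \<Sum>j\<in>UNIV. \<bar>A$i$j\<bar>)) * N u * N v"
proof -
  interpret L: psd_form L by fact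
  interpret K: psd_form K by fact
  interpret V: psd_form "V_inner L K h \<mu>" using psd_form_V_inner[OF assms(1-3)] .
  have L_bound: "\<bar>L (u$i) (v$i)\<bar> \<le> N u * N v" for i
    unfolding N_def using K.nonneg \<open>0 < h\<close>
    by (intro V.dominated_component_bound[OF \<open>psd_form L\<close>]) (simp add: V_inner_def)
  have K_bound: "\<bar>h ^ \<mu> * K (u$j) (v$i)\<bar> \<le> N u * N v" for i j
    unfolding N_def using L.nonneg \<open>0 < h\<close>
    by (intro V.dominated_component_bound psd_form_scale[OF \<open>psd_form K\<close>]) (simp_all add: V_inner_def)
  have "\<bar>\<Sum>i\<in>UNIV. L (u$i) (v$i)\<bar> \<le> real CARD('s) * (N u * N v)"
    using order_trans[OF sum_abs sum_mono[OF L_bound]] by simp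
  moreover have "\<bar>h ^ \<mu> * (\<Sum>i\<in>UNIV. \<Sum>j\<in>UNIV. A$i$j * K (u$j) (v$i))\<bar>
      \<le> (\<Sum>i\<in>UNIV. \<Sum>j\<in>UNIV. \<bar>A$i$j\<bar>) * (N u * N v)"
  proof -
    have "\<bar>h ^ \<mu> * (\<Sum>i\<in>UNIV. \<Sum>j\<in>UNIV. A$i$j * K (u$j) (v$i))\<bar>
        \<le> (\<Sum>i\<in>UNIV. \<Sum>j\<in>UNIV. \<bar>A$i$j\<bar> * \<bar>h ^ \<mu> * K (u$j) (v$i)\<bar>)"
      unfolding sum_distrib_left
      by (rule order_trans[OF sum_abs sum_mono[OF order_trans[OF sum_abs]]])
        (simp add: abs_mult mult_ac)
    also have "\<dots> \<le> (\<Sum>i\<in>UNIV. \<Sum>j\<in>UNIV. \<bar>A$i$j\<bar> * (N u * N v))"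
      by (intro sum_mono mult_left_mono K_bound) simp
    finally show ?thesis by (simp add: sum_distrib_right)
  qed
  ultimately show ?thesis
    unfolding Aop_def by (smt (verit) distrib_right mult.assoc)
qed

lemma Aop_T_coercive:
  fixes A C :: "real^'s::finite^'s"
  assumes "psd_form L" and "psd_form K" and "0 < h" and "transpose C = C"
    and coercive_C: "\<And>x. \<gamma> * (x \<bullet> x) \<le> x \<bullet> (C *v x)"
    and coercive_CA: "\<And>x. c0 * (x \<bullet> x) \<le> x \<bullet> ((C ** A) *v x)"
  shows "min \<gamma> c0 * block_form (V_inner L K h \<mu>) v v \<le> Aop A L K h \<mu> v (matrix_act C v)"
proof -
  interpret L: psd_form L by fact
  interpret K: psd_form K by fact
  have L_part: "\<gamma> * block_form L v v \<le> block_form L v (matrix_act C v)"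
    unfolding L.block_form_matrix_act using L.Gram_coercive[OF coercive_C]
    by (simp add: block_form_def)
  have K_part: "c0 * block_form K v v \<le> (\<Sum>i\<in>UNIV. \<Sum>j\<in>UNIV. A$i$j * K (v$j) (matrix_act C v $ i))"
    unfolding K.coupled_sum_matrix_act[OF \<open>transpose C = C\<close>]
    using K.Gram_coercive[OF coercive_CA] by (simp add: block_form_def)
  have "min \<gamma> c0 * block_form (V_inner L K h \<mu>) v v
      = min \<gamma> c0 * block_form L v v + h ^ \<mu> * (min \<gamma> c0 * block_form K v v)"
    by (simp add: block_form_def V_inner_def sum.distrib sum_distrib_left algebra_simps)
  also have "\<dots> \<le> \<gamma> * block_form L v v + h ^ \<mu> * (c0 * block_form K v v)"
    using psd_form.nonneg[OF L.psd_form_block_form, of v] psd_form.nonneg[OF K.psd_form_block_form, of v]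
      \<open>0 < h\<close> by (intro add_mono mult_left_mono mult_right_mono) auto
  also have "\<dots> \<le> Aop A L K h \<mu> v (matrix_act C v)"
    using L_part K_part \<open>0 < h\<close> unfolding Aop_def block_form_def
    by (intro add_mono mult_left_mono) auto
  finally show ?thesis .
qed

lemma Aop_isomorphism:
  fixes A C :: "real^'s::finite^'s" and L K :: "'v::real_vector \<Rightarrow> 'v \<Rightarrow> real"
  assumes setting: "hilbert_setting L K h \<mu>" and "0 < h"
    and "transpose C = C" and surj_C: "surj (matrix_act C :: 'v^'s \<Rightarrow> _)"
    and "0 < \<gamma>" and coercive_C: "\<And>x. \<gamma> * (x \<bullet> x) \<le> x \<bullet> (C *v x)"
    and "0 < c0" and coercive_CA: "\<And>x. c0 * (x \<bullet> x) \<le> x \<bullet> ((C ** A) *v x)"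
  defines "c1 \<equiv> real CARD('s) + (\<Sum>i\<in>UNIV. \<Sum>j\<in>UNIV. \<bar>A$i$j\<bar>)"
    and "c2 \<equiv> sqrt (\<Sum>i\<in>UNIV. \<Sum>k\<in>UNIV. \<Sum>l\<in>UNIV. \<bar>C$i$k\<bar> * \<bar>C$i$l\<bar>) / min \<gamma> c0"
  shows "bij_betw (Aop A L K h \<mu>) UNIV (Vdual L K h \<mu>)"
    and "dualnorm L K h \<mu> (Aop A L K h \<mu> u) \<le> c1 * VVnorm L K h \<mu> u"
    and "f \<in> Vdual L K h \<mu> \<Longrightarrow>
      VVnorm L K h \<mu> (inv_into UNIV (Aop A L K h \<mu>) f) \<le> c2 * dualnorm L K h \<mu> f"
proof -
  note psd = hilbert_setting_psd_forms[OF setting]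
  interpret T_coercive_form "block_form (V_inner L K h \<mu>) :: 'v^'s \<Rightarrow> _" "Aop A L K h \<mu>"
    "matrix_act C" c1 "sqrt (\<Sum>i\<in>UNIV. \<Sum>k\<in>UNIV. \<Sum>l\<in>UNIV. \<bar>C$i$k\<bar> * \<bar>C$i$l\<bar>)" "min \<gamma> c0"
  proof (intro T_coercive_form.intro T_coercive_form_axioms.intro)
    show "inner_form_space (block_form (V_inner L K h \<mu>) :: 'v^'s \<Rightarrow> _)"
      using inner_form_space_V_inner[OF setting \<open>0 < h\<close>]
      by (rule inner_form_space.inner_form_space_block_form)
    show "bilinear (Aop A L K h \<mu>)"
      using psd by (intro bilinear_Aop psd_form.bilinear)
    show "\<bar>Aop A L K h \<mu> u v\<bar> \<le> c1 * form_norm (block_form (V_inner L K h \<mu>)) u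
        * form_norm (block_form (V_inner L K h \<mu>)) v" for u v
      unfolding c1_def by (rule Aop_bounded[OF psd \<open>0 < h\<close>])
    show "form_norm (block_form (V_inner L K h \<mu>)) (matrix_act C v)
        \<le> sqrt (\<Sum>i\<in>UNIV. \<Sum>k\<in>UNIV. \<Sum>l\<in>UNIV. \<bar>C$i$k\<bar> * \<bar>C$i$l\<bar>)
          * form_norm (block_form (V_inner L K h \<mu>)) v" for v :: "'v^'s"
      by (rule psd_form.form_norm_matrix_act_le[OF psd_form_V_inner[OF psd \<open>0 < h\<close>]])
    show "min \<gamma> c0 * block_form (V_inner L K h \<mu>) v v \<le> Aop A L K h \<mu> v (matrix_act C v)" for v
      by (rule Aop_T_coercive[OF psd \<open>0 < h\<close> \<open>transpose C = C\<close> coercive_C coercive_CA])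
  qed (use linear_matrix_act surj_C \<open>0 < \<gamma>\<close> \<open>0 < c0\<close> in \<open>simp_all add: c1_def sum_nonneg\<close>)
  show "bij_betw (Aop A L K h \<mu>) UNIV (Vdual L K h \<mu>)"
    using bij_betw_b by (simp add: Vdual_eq_bounded_functionals)
  show "dualnorm L K h \<mu> (Aop A L K h \<mu> u) \<le> c1 * VVnorm L K h \<mu> u"
    using functional_norm_b_le by (simp add: dualnorm_eq_functional_norm VVnorm_eq_form_norm)
  assume "f \<in> Vdual L K h \<mu>"
  then obtain u where "f = Aop A L K h \<mu> u"
    using range_b by (auto simp: Vdual_eq_bounded_functionals)
  then show "VVnorm L K h \<mu> (inv_into UNIV (Aop A L K h \<mu>) f) \<le> c2 * dualnorm L K h \<mu> f"
    using form_norm_le_functional_norm[of u] inj_b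
    by (simp add: c2_def dualnorm_eq_functional_norm VVnorm_eq_form_norm)
qed

theorem theorem3p1:
  fixes A :: "real^'s::finite^'s"
  assumes "weakly_posdef A"
  shows "\<exists>c1 c2::real. \<forall>(L::'v::real_vector \<Rightarrow> 'v \<Rightarrow> real) K h \<mu>.
           hilbert_setting L K h \<mu> \<and> h > 0 \<and> \<mu> \<in> {1, 2} \<longrightarrow>
             bij_betw (Aop A L K h \<mu>) UNIV (Vdual L K h \<mu>)
           \<and> (\<forall>u. dualnorm L K h \<mu> (Aop A L K h \<mu> u) \<le> c1 * VVnorm L K h \<mu> u)
           \<and> (\<forall>f\<in>Vdual L K h \<mu>.
                VVnorm L K h \<mu> (inv_into UNIV (Aop A L K h \<mu>) f) \<le> c2 * dualnorm L K h \<mu> f)"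
proof -
  obtain C where "transpose C = C" and "posdef C" and "posdef (C ** A)"
    using assms unfolding weakly_posdef_def by blast
  obtain \<gamma> where "0 < \<gamma>" and coercive_C: "\<And>x. \<gamma> * (x \<bullet> x) \<le> x \<bullet> (C *v x)"
    using posdef_imp_coercive[OF \<open>posdef C\<close>] by blast
  obtain c0 where "0 < c0" and coercive_CA: "\<And>x. c0 * (x \<bullet> x) \<le> x \<bullet> ((C ** A) *v x)"
    using posdef_imp_coercive[OF \<open>posdef (C ** A)\<close>] by blast
  obtain D where "C ** D = mat 1"
    using posdef_imp_right_invertible[OF \<open>posdef C\<close>] by blast
  then have "surj (matrix_act C :: 'v^'s \<Rightarrow> _)" by (rule surj_matrix_act)
  note isomorphism = Aop_isomorphism[OF _ _ \<open>transpose C = C\<close> this \<open>0 < \<gamma>\<close> coercive_C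
      \<open>0 < c0\<close> coercive_CA]
  show ?thesis
    by (intro exI allI impI conjI ballI; elim conjE; rule isomorphism; assumption)
qed

end
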